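(* Let $\alpha>0$, $\beta\ge0$, $\lambda\in[0,1]$ and $z\notin\operatorname{argmin}\phi$. For every $t\in(0,\tau_1)$, $$\langle\dot x_z(t),\ddot x_z(t)\rangle+\lambda\frac{\alpha}{t}\|\dot x_z(t)\|^2\ge G(t)\,\frac{t\,\|\nabla\phi(z)\|^2}{(\alpha+1)^2H(t)^2},$$ where $$G(t)=(1+\alpha\lambda)H(t)^2-\alpha(1-\lambda)\big(1-H(t)\big)^2-\beta Lt-\frac{Lt^2}{2}-\big|1+\alpha(2\lambda-1)\big|\,H(t)\big(1-H(t)\big).$$
   Context: Let $\phi:\mathbb{R}^n\to\mathbb{R}$ be twice continuously differentiable and convex with $L$-Lipschitz gradient, attaining its minimum. For $z\in\mathbb{R}^n$, $x_z$ is the unique $C^1([0,\infty))\cap C^2((0,\infty))$ solution of $\ddot x(t)+\frac{\alpha}{t}\dot x(t)+\beta\nabla^2\phi(x(t))\dot x(t)+\nabla\phi(x(t))=0$ ($t>0$), $x(0)=z$, $\dot x(0)=0$. Define $H(t)=1-\frac{\beta Lt}{\alpha+2}-\frac{Lt^2}{2(\alpha+3)}$ and let $\tau_1=-\frac{\alpha+3}{\alpha+2}\beta+\sqrt{\left(\frac{\alpha+3}{\alpha+2}\right)^2\beta^2+\frac{2(\alpha+3)}{L}}$ be its unique positive zero. *)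

theory Defs
  imports "HOL-Analysis.Analysis"
begin

definition Hfun :: "real \<Rightarrow> real \<Rightarrow> real \<Rightarrow> real \<Rightarrow> real" where
  "Hfun \<alpha> \<beta> L t = 1 - \<beta> * L * t / (\<alpha> + 2) - L * t^2 / (2 * (\<alpha> + 3))"

text \<open>The unique positive zero tau_1 of H.\<close>
definition tau1 :: "real \<Rightarrow> real \<Rightarrow> real \<Rightarrow> real" where
  "tau1 \<alpha> \<beta> L = - ((\<alpha> + 3) / (\<alpha> + 2)) * \<beta>
      + sqrt (((\<alpha> + 3) / (\<alpha> + 2))^2 * \<beta>^2 + 2 * (\<alpha> + 3) / L)"

definition Gfun :: "real \<Rightarrow> real \<Rightarrow> real \<Rightarrow> real \<Rightarrow> real \<Rightarrow> real" where
  "Gfun \<alpha> \<beta> L lam t =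
     (let H = Hfun \<alpha> \<beta> L t in
      (1 + \<alpha> * lam) * H^2 - \<alpha> * (1 - lam) * (1 - H)^2 - \<beta> * L * t - L * t^2 / 2
      - \<bar>1 + \<alpha> * (2 * lam - 1)\<bar> * H * (1 - H))"

end

theory Submission
  imports Defs
begin

(* Multiplying the equation by s^alpha turns the friction term into a derivative:
   E(s) = s^alpha (x'(s) + s/(alpha+1) grad(z)) has derivative
   s^alpha (grad(z) - grad(x(s)) - beta hess(x(s)) x'(s)).  If |x'(r)| <= m r on (0,t], then
   |x(r) - z| <= m r^2/2, so this derivative is at most r^alpha L m (r^2/2 + beta r), and
   integrating gives |x'(s) + s/(alpha+1) grad(z)| <= m s (1 - H(s)).  Hence the best such m
   satisfies m <= |grad(z)|/(alpha+1) + m (1 - H(t)), i.e. m <= |grad(z)|/((alpha+1) H(t)) while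
   H(t) > 0.  Inserting the resulting bounds on x'(t), x(t) - z and x'(t) + t/(alpha+1) grad(z)
   into <x', x''> + lam alpha/t |x'|^2, with x'' eliminated by the equation, yields G(t). *)

lemma norm_derivative_le_of_lipschitz:
  fixes f :: "'a::real_normed_vector \<Rightarrow> 'b::real_normed_vector"
  assumes f': "(f has_derivative D) (at y)"
    and lipschitz: "\<And>u v. norm (f u - f v) \<le> L * norm (u - v)"
  shows "norm (D h) \<le> L * norm h"
proof -
  have lin: "linear D" using f' by (rule has_derivative_linear)
  have line: "((\<lambda>r. y + r *\<^sub>R h) has_derivative (\<lambda>r. r *\<^sub>R h)) (at 0)"
    by (auto intro!: derivative_eq_intros)
  have "(f has_derivative D) (at (y + 0 *\<^sub>R h))" using f' by simp
  from has_derivative_compose[OF line this]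
  have lim: "((\<lambda>r. norm (f (y + r *\<^sub>R h) - f y - D (r *\<^sub>R h)) / norm r) \<longlongrightarrow> 0) (at 0)"
    unfolding has_derivative_at by simp
  have eq: "norm (f (y + r *\<^sub>R h) - f y - D (r *\<^sub>R h)) / norm r
      = norm ((f (y + r *\<^sub>R h) - f y) /\<^sub>R r - D h)" if "r \<noteq> 0" for r
  proof -
    have "(f (y + r *\<^sub>R h) - f y) /\<^sub>R r - D h = (f (y + r *\<^sub>R h) - f y - D (r *\<^sub>R h)) /\<^sub>R r"
      using that by (simp add: linear_scale[OF lin] scaleR_diff_right)
    then show ?thesis by (simp add: divide_inverse_commute)
  qed
  have "((\<lambda>r. norm ((f (y + r *\<^sub>R h) - f y) /\<^sub>R r - D h)) \<longlongrightarrow> 0) (at 0)"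
  proof (rule Lim_transform_eventually[OF lim])
    show "\<forall>\<^sub>F r in at 0. norm (f (y + r *\<^sub>R h) - f y - D (r *\<^sub>R h)) / norm r
        = norm ((f (y + r *\<^sub>R h) - f y) /\<^sub>R r - D h)"
      unfolding eventually_at_filter by (rule always_eventually) (use eq in blast)
  qed
  then have "((\<lambda>r. (f (y + r *\<^sub>R h) - f y) /\<^sub>R r - D h) \<longlongrightarrow> 0) (at 0)"
    by (rule tendsto_norm_zero_cancel)
  then have "((\<lambda>r. (f (y + r *\<^sub>R h) - f y) /\<^sub>R r) \<longlongrightarrow> D h) (at 0)"
    by (rule LIM_zero_cancel)
  moreover have "norm ((f (y + r *\<^sub>R h) - f y) /\<^sub>R r) \<le> L * norm h" if "r \<noteq> 0" for r
  proof -
    have "norm ((f (y + r *\<^sub>R h) - f y) /\<^sub>R r) = norm (f (y + r *\<^sub>R h) - f y) / \<bar>r\<bar>"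
      by (simp only: norm_scaleR abs_inverse) (simp add: divide_inverse_commute)
    also have "\<dots> \<le> L * norm h"
      using lipschitz[of "y + r *\<^sub>R h" y] that by (simp add: pos_divide_le_eq mult_ac)
    finally show ?thesis .
  qed
  then have "\<forall>\<^sub>F r in at 0. norm ((f (y + r *\<^sub>R h) - f y) /\<^sub>R r) \<le> L * norm h"
    unfolding eventually_at_filter by (intro always_eventually) blast
  ultimately show ?thesis
    by (intro tendsto_upperbound[OF tendsto_norm]) auto
qed

lemma norm_diff_le_of_derivative_le:
  fixes F :: "real \<Rightarrow> 'a::real_inner"
  assumes "a \<le> b" and "continuous_on {a..b} F" and "continuous_on {a..b} h"
    and "\<And>s. a < s \<Longrightarrow> s < b \<Longrightarrow> (F has_vector_derivative F' s) (at s)"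
    and "\<And>s. a < s \<Longrightarrow> s < b \<Longrightarrow> (h has_real_derivative h' s) (at s)"
    and "\<And>s. a < s \<Longrightarrow> s < b \<Longrightarrow> norm (F' s) \<le> h' s"
  shows "norm (F b - F a) \<le> h b - h a"
proof -
  define u where "u = F b - F a"
  have "h a * norm u - inner (F a) u \<le> h b * norm u - inner (F b) u"
  proof (rule DERIV_nonneg_imp_increasing_open[OF assms(1)])
    fix s assume s: "a < s" "s < b"
    have "((\<lambda>r. inner (F r) u) has_real_derivative inner (F' s) u) (at s)"
      using bounded_linear.has_vector_derivative[OF bounded_linear_inner_left assms(4)[OF s]]
      by (simp add: has_real_derivative_iff_has_vector_derivative)
    then have "((\<lambda>r. h r * norm u - inner (F r) u)
        has_real_derivative h' s * norm u - inner (F' s) u) (at s)"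
      using assms(5)[OF s] by (intro DERIV_diff DERIV_cmult_right)
    moreover have "inner (F' s) u \<le> h' s * norm u"
      using norm_cauchy_schwarz[of "F' s" u] assms(6)[OF s] by (simp add: mult_right_mono order_trans)
    ultimately show
      "\<exists>y. ((\<lambda>r. h r * norm u - inner (F r) u) has_real_derivative y) (at s) \<and> 0 \<le> y"
      by force
  qed (use assms(2,3) in \<open>auto intro!: continuous_intros\<close>)
  then have "inner (F b - F a) u \<le> (h b - h a) * norm u"
    by (simp add: inner_diff_left algebra_simps)
  then have sq: "norm u * norm u \<le> (h b - h a) * norm u"
    unfolding u_def[symmetric] by (simp flip: power2_eq_square power2_norm_eq_inner)
  have "h a \<le> h b"
    using DERIV_nonneg_imp_increasing_open[OF assms(1) _ assms(3)] assms(5,6)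
      norm_ge_zero order_trans
    by blast
  then show ?thesis
    using sq unfolding u_def[symmetric] by (cases "u = 0") (simp_all add: mult_le_cancel_right)
qed

lemma norm_diff_le_of_powr_derivative_bound:
  fixes F :: "real \<Rightarrow> 'a::real_inner"
  assumes "0 \<le> s" and p: "p > -1" and q: "q > -1" and "continuous_on {0..s} F"
    and "\<And>r. 0 < r \<Longrightarrow> r < s \<Longrightarrow> (F has_vector_derivative F' r) (at r)"
    and "\<And>r. 0 < r \<Longrightarrow> r < s \<Longrightarrow> norm (F' r) \<le> A * r powr p + B * r powr q"
  shows "norm (F s - F 0) \<le> A * s powr (p + 1) / (p + 1) + B * s powr (q + 1) / (q + 1)"
proof -
  define h where "h r = A * r powr (p + 1) / (p + 1) + B * r powr (q + 1) / (q + 1)" for r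
  have "norm (F s - F 0) \<le> h s - h 0"
  proof (rule norm_diff_le_of_derivative_le[OF assms(1,4) _ assms(5) _ assms(6)])
    show "continuous_on {0..s} h"
      unfolding h_def using p q by (intro continuous_intros continuous_on_powr') auto
    fix r assume r: "0 < r" "r < s"
    have "(h has_real_derivative
        A * ((p + 1) * r powr p) / (p + 1) + B * ((q + 1) * r powr q) / (q + 1)) (at r)"
      unfolding h_def
      using has_real_derivative_powr[OF r(1), of "p + 1"] has_real_derivative_powr[OF r(1), of "q + 1"]
      by (intro DERIV_add DERIV_cdivide DERIV_cmult) simp_all
    then show "(h has_real_derivative A * r powr p + B * r powr q) (at r)"
      using p q by simp
  qed
  moreover have "h 0 = 0" unfolding h_def using p q by simp
  ultimately show ?thesis unfolding h_def by simp
qed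

lemma Hfun_antimono:
  assumes "\<alpha> > -2" "\<beta> \<ge> 0" "L \<ge> 0" "0 \<le> s" "s \<le> t"
  shows "Hfun \<alpha> \<beta> L t \<le> Hfun \<alpha> \<beta> L s"
proof -
  have "\<beta> * L * s / (\<alpha> + 2) \<le> \<beta> * L * t / (\<alpha> + 2)"
    using assms by (intro divide_right_mono mult_left_mono) auto
  moreover have "L * s^2 / (2 * (\<alpha> + 3)) \<le> L * t^2 / (2 * (\<alpha> + 3))"
    using assms by (intro divide_right_mono mult_left_mono power_mono) auto
  ultimately show ?thesis unfolding Hfun_def by linarith
qed

lemma Hfun_pos:
  assumes "\<alpha> > -2" "\<beta> \<ge> 0" "L > 0" "0 \<le> t" "t < tau1 \<alpha> \<beta> L"
  shows "Hfun \<alpha> \<beta> L t > 0"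
proof -
  define a where "a = (\<alpha> + 3) / (\<alpha> + 2)"
  define S where "S = sqrt (a^2 * \<beta>^2 + 2 * (\<alpha> + 3) / L)"
  have "S^2 = a^2 * \<beta>^2 + 2 * (\<alpha> + 3) / L"
    unfolding S_def using assms by (intro real_sqrt_pow2) auto
  then have "L * S^2 = L * (a^2 * \<beta>^2) + L * (2 * (\<alpha> + 3) / L)"
    by (simp only: distrib_left)
  then have LS2: "L * S^2 = L * a^2 * \<beta>^2 + 2 * (\<alpha> + 3)"
    using assms by simp
  have "0 \<le> t + a * \<beta>" "t + a * \<beta> < S"
    using assms unfolding tau1_def a_def[symmetric] S_def[symmetric] by (auto simp: a_def)
  then have "(t + a * \<beta>)^2 < S^2" by (intro power_strict_mono) auto
  then have "L * (S^2 - (t + a * \<beta>)^2) > 0" using assms by simp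
  moreover have "2 * (\<alpha> + 3) * Hfun \<alpha> \<beta> L t = 2 * (\<alpha> + 3) - L * t^2 - 2 * L * t * a * \<beta>"
  proof -
    have "2 * (\<alpha> + 3) * (\<beta> * L * t / (\<alpha> + 2)) = 2 * L * t * a * \<beta>"
      unfolding a_def using assms by (simp add: field_simps)
    moreover have "2 * (\<alpha> + 3) * (L * t^2 / (2 * (\<alpha> + 3))) = L * t^2"
      using assms by simp
    ultimately show ?thesis
      unfolding Hfun_def right_diff_distrib by simp
  qed
  moreover have "L * (S^2 - (t + a * \<beta>)^2) = 2 * (\<alpha> + 3) - L * t^2 - 2 * L * t * a * \<beta>"
    unfolding right_diff_distrib LS2 by (simp add: power2_eq_square algebra_simps)
  ultimately have "2 * (\<alpha> + 3) * Hfun \<alpha> \<beta> L t > 0"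
    by linarith
  then show ?thesis using assms by (simp add: zero_less_mult_iff)
qed

(* In the application v, w, h, g are x'(t), t/(alpha+1) grad(z), hess(x(t)) x'(t) and
   grad(x(t)) - grad(z), so that the left-hand side is <x', x''> + lam alpha/t |x'|^2. *)
lemma inner_ge_Gfun_of_estimates:
  fixes v w h g :: "'a::real_inner" and \<alpha> \<beta> L t lam c :: real
  defines "H \<equiv> Hfun \<alpha> \<beta> L t"
  assumes "t > 0" "\<alpha> \<ge> 0" "lam \<le> 1" and beta: "\<beta> \<ge> 0" and "0 < H" "c \<ge> 0"
    and w: "norm w = c * t" and dev: "norm (v + w) \<le> c * t * (1 - H) / H"
    and h: "inner v h \<le> L * (c * t / H)^2"
    and g: "inner v g \<le> L * t^2 / 2 * (c^2 * t / H^2)"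
  shows "inner v (- (\<alpha> / t) *\<^sub>R v - \<beta> *\<^sub>R h - (((\<alpha> + 1) / t) *\<^sub>R w + g))
      + lam * (\<alpha> / t) * (norm v)^2
    \<ge> Gfun \<alpha> \<beta> L lam t * (c^2 * t / H^2)"
proof -
  define e where "e = v + w"
  define k where "k = 1 + \<alpha> * (2 * lam - 1)"
  define E where "E = c * t * (1 - H) / H"
  have ew: "k * inner e w \<le> \<bar>k\<bar> * (E * (c * t))"
  proof -
    have "k * inner e w \<le> \<bar>k\<bar> * \<bar>inner e w\<bar>"
      by (metis abs_ge_self abs_mult)
    also have "\<dots> \<le> \<bar>k\<bar> * (norm e * norm w)"
      by (intro mult_left_mono Cauchy_Schwarz_ineq2) simp
    also have "\<dots> \<le> \<bar>k\<bar> * (E * (c * t))"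
      using mult_right_mono[OF dev, of "c * t"] w assms unfolding e_def E_def
      by (intro mult_left_mono) simp_all
    finally show ?thesis .
  qed
  have ee: "\<alpha> * (1 - lam) * (norm e)^2 \<le> \<alpha> * (1 - lam) * E^2"
    using dev assms unfolding e_def E_def by (intro mult_left_mono power_mono) auto
  have "inner v (- (\<alpha> / t) *\<^sub>R v - ((\<alpha> + 1) / t) *\<^sub>R w) + lam * (\<alpha> / t) * (norm v)^2
      = ((1 + \<alpha> * lam) * (norm w)^2 - k * inner e w - \<alpha> * (1 - lam) * (norm e)^2) / t"
    unfolding e_def k_def using \<open>t > 0\<close>
    by (simp add: field_simps power2_norm_eq_inner inner_add_left inner_add_right
        inner_diff_right inner_commute)
  also have "\<dots> \<ge> ((1 + \<alpha> * lam) * (c * t)^2 - \<bar>k\<bar> * (E * (c * t)) - \<alpha> * (1 - lam) * E^2) / t"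
    using ew ee w assms by (intro divide_right_mono) auto
  also have "((1 + \<alpha> * lam) * (c * t)^2 - \<bar>k\<bar> * (E * (c * t)) - \<alpha> * (1 - lam) * E^2) / t
      = ((1 + \<alpha> * lam) * H^2 - \<alpha> * (1 - lam) * (1 - H)^2 - \<bar>k\<bar> * H * (1 - H)) * (c^2 * t / H^2)"
    unfolding E_def using assms by (simp add: field_simps power2_eq_square)
  finally have main:
    "inner v (- (\<alpha> / t) *\<^sub>R v - ((\<alpha> + 1) / t) *\<^sub>R w) + lam * (\<alpha> / t) * (norm v)^2
      \<ge> ((1 + \<alpha> * lam) * H^2 - \<alpha> * (1 - lam) * (1 - H)^2 - \<bar>k\<bar> * H * (1 - H)) * (c^2 * t / H^2)" .
  have "\<beta> * inner v h \<le> \<beta> * L * t * (c^2 * t / H^2)"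
    using mult_left_mono[OF h beta] by (simp add: power2_eq_square field_simps)
  with main g show ?thesis
    unfolding Gfun_def Let_def H_def[symmetric] k_def
    by (simp add: inner_diff_right inner_add_right algebra_simps)
qed

locale hessian_damped_trajectory =
  fixes grad :: "'a::real_inner \<Rightarrow> 'a"
    and hess :: "'a \<Rightarrow> ('a \<Rightarrow>\<^sub>L 'a)"
    and L \<alpha> \<beta> :: real
    and x x' x'' :: "real \<Rightarrow> 'a"
  assumes hess: "\<And>y. (grad has_derivative blinfun_apply (hess y)) (at y)"
    and lipschitz: "\<And>u v. norm (grad u - grad v) \<le> L * norm (u - v)"
    and L_pos: "L > 0"
    and alpha_pos: "\<alpha> > 0"
    and beta_nonneg: "\<beta> \<ge> 0"
    and x_deriv: "\<And>t. t \<ge> 0 \<Longrightarrow> (x has_vector_derivative x' t) (at t within {0..})"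
    and x'_cont: "continuous_on {0..} x'"
    and x'_deriv: "\<And>t. t > 0 \<Longrightarrow> (x' has_vector_derivative x'' t) (at t)"
    and ode: "\<And>t. t > 0 \<Longrightarrow>
       x'' t + (\<alpha> / t) *\<^sub>R x' t + \<beta> *\<^sub>R (hess (x t) (x' t)) + grad (x t) = 0"
begin

lemma norm_hess_le: "norm (hess y h) \<le> L * norm h"
  by (rule norm_derivative_le_of_lipschitz[OF hess lipschitz])

lemma x_has_vector_derivative: "s > 0 \<Longrightarrow> (x has_vector_derivative x' s) (at s)"
  using x_deriv[of s] at_within_interior[of s "{0..}"] by simp

lemma continuous_on_x: "continuous_on {0..} x"
  unfolding continuous_on_eq_continuous_within
  using x_deriv has_vector_derivative_continuous by (metis atLeast_iff)

lemma acceleration_eq: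
  "s > 0 \<Longrightarrow> x'' s = - (\<alpha> / s) *\<^sub>R x' s - \<beta> *\<^sub>R hess (x s) (x' s) - grad (x s)"
  using ode[of s] by (simp add: algebra_simps eq_neg_iff_add_eq_0)

definition weighted_momentum :: "real \<Rightarrow> 'a" where
  "weighted_momentum s = s powr \<alpha> *\<^sub>R (x' s + (s / (\<alpha> + 1)) *\<^sub>R grad (x 0))"

lemma weighted_momentum_0: "weighted_momentum 0 = 0"
  by (simp add: weighted_momentum_def)

lemma norm_weighted_momentum:
  "norm (weighted_momentum s) = s powr \<alpha> * norm (x' s + (s / (\<alpha> + 1)) *\<^sub>R grad (x 0))"
  by (simp add: weighted_momentum_def)

lemma continuous_on_weighted_momentum: "continuous_on {0..} weighted_momentum"
  unfolding weighted_momentum_def using alpha_pos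
  by (intro continuous_intros continuous_on_powr' x'_cont) auto

lemma weighted_momentum_has_derivative:
  assumes "s > 0"
  shows "(weighted_momentum has_vector_derivative
    s powr \<alpha> *\<^sub>R (grad (x 0) - grad (x s) - \<beta> *\<^sub>R hess (x s) (x' s))) (at s)"
proof -
  define g where "g = grad (x 0)"
  have coef: "s powr \<alpha> * (1 / (\<alpha> + 1)) + \<alpha> * s powr (\<alpha> - 1) * (s / (\<alpha> + 1)) = s powr \<alpha>"
  proof -
    have "\<alpha> * s powr (\<alpha> - 1) * (s / (\<alpha> + 1)) = s powr \<alpha> * (\<alpha> / (\<alpha> + 1))"
      using assms by (simp add: powr_diff)
    moreover have "1 / (\<alpha> + 1) + \<alpha> / (\<alpha> + 1) = 1"
      using alpha_pos by (simp add: field_simps)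
    ultimately show ?thesis by (metis distrib_left mult_1_right)
  qed
  have deriv: "(weighted_momentum has_vector_derivative
      s powr \<alpha> *\<^sub>R (x'' s + (1 / (\<alpha> + 1)) *\<^sub>R g)
      + (\<alpha> * s powr (\<alpha> - 1)) *\<^sub>R (x' s + (s / (\<alpha> + 1)) *\<^sub>R g)) (at s)"
    unfolding weighted_momentum_def g_def[symmetric] using assms alpha_pos
    by (intro has_vector_derivative_scaleR has_real_derivative_powr has_vector_derivative_add
        x'_deriv) (auto intro!: derivative_eq_intros)
  have "s powr \<alpha> *\<^sub>R (x'' s + (1 / (\<alpha> + 1)) *\<^sub>R g)
      + (\<alpha> * s powr (\<alpha> - 1)) *\<^sub>R (x' s + (s / (\<alpha> + 1)) *\<^sub>R g)
      = s powr \<alpha> *\<^sub>R x'' s + (\<alpha> * s powr (\<alpha> - 1)) *\<^sub>R x' s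
        + (s powr \<alpha> * (1 / (\<alpha> + 1)) + \<alpha> * s powr (\<alpha> - 1) * (s / (\<alpha> + 1))) *\<^sub>R g"
    by (simp add: scaleR_add_right scaleR_add_left)
  also have "\<dots> = s powr \<alpha> *\<^sub>R (x'' s + (\<alpha> / s) *\<^sub>R x' s + g)"
  proof -
    have "\<alpha> * s powr (\<alpha> - 1) = s powr \<alpha> * (\<alpha> / s)"
      using assms by (simp add: powr_diff)
    then show ?thesis unfolding coef by (simp add: scaleR_add_right)
  qed
  also have "x'' s + (\<alpha> / s) *\<^sub>R x' s + g = g - grad (x s) - \<beta> *\<^sub>R hess (x s) (x' s)"
    using acceleration_eq[OF assms] by simp
  finally have eq: "s powr \<alpha> *\<^sub>R (x'' s + (1 / (\<alpha> + 1)) *\<^sub>R g)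
      + (\<alpha> * s powr (\<alpha> - 1)) *\<^sub>R (x' s + (s / (\<alpha> + 1)) *\<^sub>R g)
      = s powr \<alpha> *\<^sub>R (g - grad (x s) - \<beta> *\<^sub>R hess (x s) (x' s))" .
  show ?thesis using deriv unfolding eq unfolding g_def .
qed

lemma norm_momentum_rate_le:
  "norm (grad (x 0) - grad (x s) - \<beta> *\<^sub>R hess (x s) (x' s))
    \<le> L * norm (x s - x 0) + \<beta> * L * norm (x' s)"
proof -
  have "norm (grad (x 0) - grad (x s) - \<beta> *\<^sub>R hess (x s) (x' s))
      \<le> norm (grad (x 0) - grad (x s)) + norm (\<beta> *\<^sub>R hess (x s) (x' s))"
    by (rule norm_triangle_ineq4)
  also have "\<dots> \<le> L * norm (x s - x 0) + \<beta> * (L * norm (x' s))"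
    using lipschitz[of "x 0" "x s"] norm_hess_le[of "x s" "x' s"] beta_nonneg
    by (intro add_mono) (auto simp: norm_minus_commute intro: mult_left_mono)
  finally show ?thesis by (simp add: mult.assoc)
qed

lemma norm_velocity_le_deviation:
  assumes "s \<ge> 0"
  shows "norm (x' s)
    \<le> norm (x' s + (s / (\<alpha> + 1)) *\<^sub>R grad (x 0)) + s * (norm (grad (x 0)) / (\<alpha> + 1))"
  using norm_triangle_ineq4[of "x' s + (s / (\<alpha> + 1)) *\<^sub>R grad (x 0)" "(s / (\<alpha> + 1)) *\<^sub>R grad (x 0)"]
    assms alpha_pos by simp

lemma norm_velocity_deviation_le:
  fixes p q :: nat
  assumes s: "0 < s"
    and rate: "\<And>r. 0 < r \<Longrightarrow> r < s \<Longrightarrow>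
      L * norm (x r - x 0) + \<beta> * L * norm (x' r) \<le> A * r^p + B * r^q"
  shows "norm (x' s + (s / (\<alpha> + 1)) *\<^sub>R grad (x 0))
    \<le> A * s^(p + 1) / (\<alpha> + p + 1) + B * s^(q + 1) / (\<alpha> + q + 1)"
proof -
  have "norm (weighted_momentum s - weighted_momentum 0)
      \<le> A * s powr (\<alpha> + p + 1) / (\<alpha> + p + 1) + B * s powr (\<alpha> + q + 1) / (\<alpha> + q + 1)"
  proof (rule norm_diff_le_of_powr_derivative_bound)
    show "0 \<le> s" "\<alpha> + p > -1" "\<alpha> + q > -1" using s alpha_pos by auto
    show "continuous_on {0..s} weighted_momentum"
      using continuous_on_weighted_momentum by (rule continuous_on_subset) auto
    fix r assume r: "0 < r" "r < s"
    show "(weighted_momentum has_vector_derivative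
        r powr \<alpha> *\<^sub>R (grad (x 0) - grad (x r) - \<beta> *\<^sub>R hess (x r) (x' r))) (at r)"
      by (rule weighted_momentum_has_derivative[OF r(1)])
    have "norm (r powr \<alpha> *\<^sub>R (grad (x 0) - grad (x r) - \<beta> *\<^sub>R hess (x r) (x' r)))
        \<le> r powr \<alpha> * (A * r^p + B * r^q)"
      using order_trans[OF norm_momentum_rate_le rate[OF r]] by (simp add: mult_left_mono)
    also have "\<dots> = A * r powr (\<alpha> + p) + B * r powr (\<alpha> + q)"
      using r by (simp add: powr_add powr_realpow algebra_simps)
    finally show "norm (r powr \<alpha> *\<^sub>R (grad (x 0) - grad (x r) - \<beta> *\<^sub>R hess (x r) (x' r)))
        \<le> A * r powr (\<alpha> + p) + B * r powr (\<alpha> + q)" .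
  qed
  moreover have "s powr (\<alpha> + n + 1) = s powr \<alpha> * s^(n + 1)" for n :: nat
  proof -
    have "\<alpha> + real n + 1 = \<alpha> + real (n + 1)" by simp
    then show ?thesis by (simp only: powr_add powr_realpow[OF s])
  qed
  ultimately have "s powr \<alpha> * norm (x' s + (s / (\<alpha> + 1)) *\<^sub>R grad (x 0))
      \<le> s powr \<alpha> * (A * s^(p + 1) / (\<alpha> + p + 1) + B * s^(q + 1) / (\<alpha> + q + 1))"
    by (simp add: weighted_momentum_0 norm_weighted_momentum algebra_simps)
  then show ?thesis using s by simp
qed

lemma velocity_linear_bound_exists:
  assumes "t > 0"
  shows "\<exists>M. \<forall>s\<in>{0<..t}. norm (x' s) \<le> M * s"
proof -
  define \<rho> where "\<rho> s = L * norm (x s - x 0) + \<beta> * L * norm (x' s)" for s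
  have "continuous_on {0..t} \<rho>"
    unfolding \<rho>_def
    using continuous_on_subset[OF continuous_on_x] continuous_on_subset[OF x'_cont]
    by (intro continuous_intros) auto
  moreover have "{0..t} \<noteq> {}" using assms by simp
  ultimately obtain s0 where s0: "\<forall>s\<in>{0..t}. \<rho> s \<le> \<rho> s0"
    using continuous_attains_sup[OF compact_Icc] by blast
  have "norm (x' s) \<le> (\<rho> s0 / (\<alpha> + 1) + norm (grad (x 0)) / (\<alpha> + 1)) * s" if s: "0 < s" "s \<le> t" for s
  proof -
    have "norm (x' s + (s / (\<alpha> + 1)) *\<^sub>R grad (x 0))
        \<le> \<rho> s0 * s^(0 + 1) / (\<alpha> + real 0 + 1) + 0 * s^(0 + 1) / (\<alpha> + real 0 + 1)"
      by (rule norm_velocity_deviation_le) (use s s0 in \<open>auto simp: \<rho>_def\<close>)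
    then have "norm (x' s) \<le> \<rho> s0 * s / (\<alpha> + 1) + s * (norm (grad (x 0)) / (\<alpha> + 1))"
      using norm_velocity_le_deviation[of s] s by simp
    also have "\<dots> = (\<rho> s0 / (\<alpha> + 1) + norm (grad (x 0)) / (\<alpha> + 1)) * s"
      by (simp add: algebra_simps)
    finally show ?thesis .
  qed
  then show ?thesis by (intro exI) auto
qed

lemma position_increment_le:
  assumes lin: "\<And>r. 0 < r \<Longrightarrow> r \<le> t \<Longrightarrow> norm (x' r) \<le> m * r" and s: "0 \<le> s" "s \<le> t"
  shows "norm (x s - x 0) \<le> m * s^2 / 2"
proof -
  have "norm (x s - x 0) \<le> m * s^2 / 2 - m * 0^2 / 2"
  proof (rule norm_diff_le_of_derivative_le[where F'=x' and h'="\<lambda>r. m * r"])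
    show "continuous_on {0..s} x" using continuous_on_x by (rule continuous_on_subset) auto
    fix r assume "0 < r" "r < s"
    then show "(x has_vector_derivative x' r) (at r)" "norm (x' r) \<le> m * r"
      using x_has_vector_derivative lin s by auto
    show "((\<lambda>r. m * r^2 / 2) has_real_derivative m * r) (at r)"
      by (auto intro!: derivative_eq_intros)
  qed (use s in \<open>auto intro!: continuous_intros\<close>)
  then show ?thesis by simp
qed

lemma velocity_deviation_le_of_linear_bound:
  assumes lin: "\<And>r. 0 < r \<Longrightarrow> r \<le> t \<Longrightarrow> norm (x' r) \<le> m * r" and s: "0 < s" "s \<le> t"
  shows "norm (x' s + (s / (\<alpha> + 1)) *\<^sub>R grad (x 0)) \<le> m * s * (1 - Hfun \<alpha> \<beta> L s)"
proof -
  have "norm (x' s + (s / (\<alpha> + 1)) *\<^sub>R grad (x 0))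
      \<le> m * L / 2 * s^(2 + 1) / (\<alpha> + real 2 + 1)
        + \<beta> * L * m * s^(1 + 1) / (\<alpha> + real 1 + 1)"
  proof (rule norm_velocity_deviation_le)
    fix r assume r: "0 < r" "r < s"
    have "L * norm (x r - x 0) \<le> L * (m * r^2 / 2)"
      using position_increment_le[OF lin, of r] r s L_pos by (intro mult_left_mono) auto
    moreover have "\<beta> * L * norm (x' r) \<le> \<beta> * L * (m * r)"
      using lin[of r] r s L_pos beta_nonneg by (intro mult_left_mono) auto
    ultimately show
      "L * norm (x r - x 0) + \<beta> * L * norm (x' r) \<le> m * L / 2 * r^2 + \<beta> * L * m * r^1"
      by (simp add: algebra_simps)
  qed (use s in simp)
  also have "\<dots> = m * s * (\<beta> * L * s / (\<alpha> + 2) + L * s^2 / (2 * (\<alpha> + 3)))"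
    using alpha_pos by (simp add: field_simps power2_eq_square power3_eq_cube)
  also have "\<dots> = m * s * (1 - Hfun \<alpha> \<beta> L s)"
    by (simp add: Hfun_def)
  finally show ?thesis .
qed

lemma velocity_le:
  assumes t: "0 < t" "t < tau1 \<alpha> \<beta> L" and s: "0 < s" "s \<le> t"
  shows "norm (x' s) \<le> norm (grad (x 0)) / ((\<alpha> + 1) * Hfun \<alpha> \<beta> L t) * s"
proof -
  define H where "H = Hfun \<alpha> \<beta> L t"
  define c where "c = norm (grad (x 0)) / (\<alpha> + 1)"
  have H: "0 < H"
    unfolding H_def using Hfun_pos t alpha_pos beta_nonneg L_pos by auto
  define m where "m = (SUP r\<in>{0<..t}. norm (x' r) / r)"
  obtain M where M: "\<forall>r\<in>{0<..t}. norm (x' r) \<le> M * r"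
    using velocity_linear_bound_exists[OF t(1)] by blast
  have bdd: "bdd_above ((\<lambda>r. norm (x' r) / r) ` {0<..t})"
    using M by (intro bdd_aboveI2[where M=M]) (simp add: pos_divide_le_eq)
  have lin: "norm (x' r) \<le> m * r" if "0 < r" "r \<le> t" for r
    using cSUP_upper[OF _ bdd, of r] that unfolding m_def by (simp add: pos_divide_le_eq)
  have "0 \<le> m * t"
    using lin[OF t(1) order_refl] by (meson norm_ge_zero order_trans)
  then have "m \<ge> 0" using t by (simp add: zero_le_mult_iff)
  have "norm (x' r) / r \<le> c + m * (1 - H)" if r: "0 < r" "r \<le> t" for r
  proof -
    have "norm (x' r) \<le> m * r * (1 - Hfun \<alpha> \<beta> L r) + r * c"
      using norm_velocity_le_deviation[of r] velocity_deviation_le_of_linear_bound[OF lin r] r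
      unfolding c_def by simp
    also have "\<dots> \<le> m * r * (1 - H) + r * c"
      unfolding H_def
      using Hfun_antimono[of \<alpha> \<beta> L r t] r alpha_pos beta_nonneg L_pos \<open>m \<ge> 0\<close>
      by (simp add: mult_left_mono)
    finally have "norm (x' r) \<le> (c + m * (1 - H)) * r"
      by (simp add: algebra_simps)
    then show ?thesis using r by (simp add: pos_divide_le_eq)
  qed
  then have "m \<le> c + m * (1 - H)"
    unfolding m_def using t by (intro cSUP_least) auto
  then have "m \<le> c / H" using H by (simp add: le_divide_eq algebra_simps)
  then have "m * s \<le> c / H * s" by (rule mult_right_mono) (use s in simp)
  then show ?thesis using lin[OF s] unfolding c_def H_def by simp
qed

theorem inner_velocity_acceleration_ge:
  assumes t: "0 < t" "t < tau1 \<alpha> \<beta> L" and lam: "lam \<le> 1"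
  shows "x' t \<bullet> x'' t + lam * (\<alpha> / t) * (norm (x' t))^2
    \<ge> Gfun \<alpha> \<beta> L lam t * (t * (norm (grad (x 0)))^2 / ((\<alpha> + 1)^2 * (Hfun \<alpha> \<beta> L t)^2))"
proof -
  define H where "H = Hfun \<alpha> \<beta> L t"
  define c where "c = norm (grad (x 0)) / (\<alpha> + 1)"
  define w where "w = (t / (\<alpha> + 1)) *\<^sub>R grad (x 0)"
  have H: "0 < H"
    unfolding H_def using Hfun_pos t alpha_pos beta_nonneg L_pos by auto
  have c: "c \<ge> 0" unfolding c_def using alpha_pos by simp
  have lin: "norm (x' r) \<le> c / H * r" if "0 < r" "r \<le> t" for r
    using velocity_le[OF t that] unfolding c_def H_def by simp
  have v: "norm (x' t) \<le> c * t / H"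
    using lin[of t] t by simp
  have position: "norm (x t - x 0) \<le> c / H * t^2 / 2"
    using position_increment_le[OF lin, of t] t by simp
  have deviation: "norm (x' t + w) \<le> c * t * (1 - H) / H"
    using velocity_deviation_le_of_linear_bound[OF lin t(1) order_refl]
    unfolding w_def H_def by simp
  have hess_term: "inner (x' t) (hess (x t) (x' t)) \<le> L * (c * t / H)^2"
  proof -
    have "inner (x' t) (hess (x t) (x' t)) \<le> norm (x' t) * (L * norm (x' t))"
      using norm_cauchy_schwarz[of "x' t"] norm_hess_le[of "x t" "x' t"]
      by (meson mult_left_mono norm_ge_zero order_trans)
    also have "\<dots> = L * (norm (x' t))^2"
      by (simp add: power2_eq_square)
    also have "\<dots> \<le> L * (c * t / H)^2"
      using v L_pos by (intro mult_left_mono power_mono) auto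
    finally show ?thesis .
  qed
  have grad_term: "inner (x' t) (grad (x t) - grad (x 0)) \<le> L * t^2 / 2 * (c^2 * t / H^2)"
  proof -
    have "inner (x' t) (grad (x t) - grad (x 0)) \<le> norm (x' t) * (L * norm (x t - x 0))"
      using norm_cauchy_schwarz[of "x' t"] lipschitz[of "x t" "x 0"]
      by (meson mult_left_mono norm_ge_zero order_trans)
    also have "\<dots> \<le> (c * t / H) * (L * (c / H * t^2 / 2))"
      using v position L_pos H c t by (intro mult_mono mult_left_mono) auto
    also have "\<dots> = L * t^2 / 2 * (c^2 * t / H^2)"
      by (simp add: field_simps power2_eq_square)
    finally show ?thesis .
  qed
  have "inner (x' t) (- (\<alpha> / t) *\<^sub>R x' t - \<beta> *\<^sub>R hess (x t) (x' t)
        - (((\<alpha> + 1) / t) *\<^sub>R w + (grad (x t) - grad (x 0))))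
      + lam * (\<alpha> / t) * (norm (x' t))^2 \<ge> Gfun \<alpha> \<beta> L lam t * (c^2 * t / H^2)"
    unfolding H_def using t lam alpha_pos beta_nonneg H c deviation hess_term grad_term
    by (intro inner_ge_Gfun_of_estimates) (auto simp: H_def w_def c_def)
  moreover have "((\<alpha> + 1) / t) *\<^sub>R w = grad (x 0)"
    unfolding w_def using t alpha_pos by simp
  ultimately show ?thesis
    using acceleration_eq[OF t(1)] unfolding c_def H_def by (simp add: power_divide mult_ac)
qed

end

theorem mainTheorem4:
  fixes \<phi> :: "'a::euclidean_space \<Rightarrow> real"
    and grad :: "'a \<Rightarrow> 'a"
    and hess :: "'a \<Rightarrow> ('a \<Rightarrow>\<^sub>L 'a)"
    and L \<alpha> \<beta> lam :: real
    and z :: 'a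
    and x x' x'' :: "real \<Rightarrow> 'a"
  assumes grad: "\<And>y. (\<phi> has_derivative (\<lambda>h. grad y \<bullet> h)) (at y)"
    and hess: "\<And>y. (grad has_derivative blinfun_apply (hess y)) (at y)"
    and hess_cont: "continuous_on UNIV hess"
    and convex: "convex_on UNIV \<phi>"
    and L_pos: "L > 0"
    and lipschitz: "\<And>u v. norm (grad u - grad v) \<le> L * norm (u - v)"
    and has_min: "\<exists>m. \<forall>y. \<phi> m \<le> \<phi> y"
    and alpha_pos: "\<alpha> > 0"
    and beta_nonneg: "\<beta> \<ge> 0"
    and lambda: "lam \<in> {0..1}"
    and z_not_min: "z \<notin> {m. \<forall>y. \<phi> m \<le> \<phi> y}"
    and x_deriv: "\<And>t. t \<ge> 0 \<Longrightarrow> (x has_vector_derivative x' t) (at t within {0..})"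
    and x'_cont: "continuous_on {0..} x'"
    and x'_deriv: "\<And>t. t > 0 \<Longrightarrow> (x' has_vector_derivative x'' t) (at t)"
    and x''_cont: "continuous_on {0<..} x''"
    and ode: "\<And>t. t > 0 \<Longrightarrow>
       x'' t + (\<alpha> / t) *\<^sub>R x' t + \<beta> *\<^sub>R (hess (x t) (x' t)) + grad (x t) = 0"
    and init_pos: "x 0 = z"
    and init_vel: "x' 0 = 0"
  shows "\<forall>t \<in> {0<..<tau1 \<alpha> \<beta> L}.
     x' t \<bullet> x'' t + lam * (\<alpha> / t) * (norm (x' t))^2
       \<ge> Gfun \<alpha> \<beta> L lam t * (t * (norm (grad z))^2 / ((\<alpha> + 1)^2 * (Hfun \<alpha> \<beta> L t)^2))"
proof -
  interpret hessian_damped_trajectory grad hess L \<alpha> \<beta> x x' x''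
    using hess lipschitz L_pos alpha_pos beta_nonneg x_deriv x'_cont x'_deriv ode
    by unfold_locales
  show ?thesis
    using inner_velocity_acceleration_ge lambda unfolding init_pos by auto
qed

end
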